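(* Let $m\in\mathbb{N}_+$. There exist strictly monotonic sequences $(t_i)$ and $(\tau_i)$ of natural numbers and uncountably many $m$-tuples $\alpha=(\alpha_1,\dots,\alpha_m)\in(0,1)^m$ such that, for the action $\mathbb{Z}^m\curvearrowright_\alpha\mathbb{T}^1$, the family of levels $(t_i\mathbb{T}^1,d_{\mathbb{Z}^m})_i$ of the warped cone is quasi-isometric to the family of tori $(\mathbb{T}^{m+1},\tau_i d)_i$.
   Context: $\mathbb{T}^1=\mathbb{R}/\mathbb{Z}$ with standard metric $d$ of circumference $1$, $\mathbb{T}^{m+1}$ with its standard flat metric $d$. The action $\mathbb{Z}^m\curvearrowright_\alpha\mathbb{T}^1$ is $(n_1,\dots,n_m).z=z+\sum_i n_i\alpha_i$, and $\mathbb{Z}^m$ has generating set $\{\pm e_1,\dots,\pm e_m\}$. For $t>0$, $d_{\mathbb{Z}^m}$ is the largest metric on $\mathbb{T}^1$ with $d_{\mathbb{Z}^m}(z,z')\le td(z,z')$ and $d_{\mathbb{Z}^m}(z,z\pm\alpha_j)\le1$ for all $j$. Two sequences of metric spaces $(X_i),(Y_i)$ are quasi-isometric if there are $C\ge1,A\ge0$ and maps $f_i:X_i\to Y_i$ with $C^{-1}d(x,x')-A\le d(f_i(x),f_i(x'))\le Cd(x,x')+A$ and the $A$-neighbourhood of $f_i(X_i)$ equal to $Y_i$. *)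

theory Defs
  imports Complex_Main "HOL-Library.Countable_Set"
begin

text \<open>The circle T^1 = R/Z, represented by the fundamental domain [0,1).\<close>
definition circle :: "real set" where
  "circle = {0..<1}"

definition cdist :: "real \<Rightarrow> real \<Rightarrow> real" where
  "cdist x y = min (frac (x - y)) (1 - frac (x - y))"

text \<open>The torus T^n = R^n/Z^n, points as functions on indices < n with values in [0,1),
  zero outside; flat metric.\<close>
definition torus :: "nat \<Rightarrow> (nat \<Rightarrow> real) set" where
  "torus n = {x. (\<forall>i<n. 0 \<le> x i \<and> x i < 1) \<and> (\<forall>i\<ge>n. x i = 0)}"

definition torus_dist :: "nat \<Rightarrow> (nat \<Rightarrow> real) \<Rightarrow> (nat \<Rightarrow> real) \<Rightarrow> real" where
  "torus_dist n x y = sqrt (\<Sum>i<n. (cdist (x i) (y i))\<^sup>2)"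

definition metric_on :: "'a set \<Rightarrow> ('a \<Rightarrow> 'a \<Rightarrow> real) \<Rightarrow> bool" where
  "metric_on X \<delta> \<longleftrightarrow>
     (\<forall>x\<in>X. \<forall>y\<in>X. 0 \<le> \<delta> x y \<and> (\<delta> x y = 0 \<longleftrightarrow> x = y) \<and> \<delta> x y = \<delta> y x) \<and>
     (\<forall>x\<in>X. \<forall>y\<in>X. \<forall>z\<in>X. \<delta> x z \<le> \<delta> x y + \<delta> y z)"

text \<open>Metrics on T^1 admissible for the warped metric of the action of Z^m by the rotations
  alpha_1, ..., alpha_m (generators \<plusminus>e_j act by z \<mapsto> z \<plusminus> alpha_j mod 1) at level t.\<close>
definition warp_admissible :: "nat \<Rightarrow> (nat \<Rightarrow> real) \<Rightarrow> real \<Rightarrow> (real \<Rightarrow> real \<Rightarrow> real) \<Rightarrow> bool" where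
  "warp_admissible m \<alpha> t \<delta> \<longleftrightarrow>
     metric_on circle \<delta> \<and>
     (\<forall>z\<in>circle. \<forall>z'\<in>circle. \<delta> z z' \<le> t * cdist z z') \<and>
     (\<forall>z\<in>circle. \<forall>j<m. \<delta> z (frac (z + \<alpha> j)) \<le> 1 \<and> \<delta> z (frac (z - \<alpha> j)) \<le> 1)"

definition warped_dist :: "nat \<Rightarrow> (nat \<Rightarrow> real) \<Rightarrow> real \<Rightarrow> real \<Rightarrow> real \<Rightarrow> real" where
  "warped_dist m \<alpha> t z z' = Sup {\<delta> z z' | \<delta>. warp_admissible m \<alpha> t \<delta>}"

definition qi_families ::
  "(nat \<Rightarrow> 'a set) \<Rightarrow> (nat \<Rightarrow> 'a \<Rightarrow> 'a \<Rightarrow> real) \<Rightarrow> (nat \<Rightarrow> 'b set) \<Rightarrow> (nat \<Rightarrow> 'b \<Rightarrow> 'b \<Rightarrow> real) \<Rightarrow> bool" where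
  "qi_families X dX Y dY \<longleftrightarrow>
     (\<exists>C A. C \<ge> 1 \<and> A \<ge> 0 \<and> (\<forall>i. \<exists>f. (\<forall>x\<in>X i. f x \<in> Y i) \<and>
        (\<forall>x\<in>X i. \<forall>x'\<in>X i. dX i x x' / C - A \<le> dY i (f x) (f x') \<and>
                             dY i (f x) (f x') \<le> C * dX i x x' + A) \<and>
        (\<forall>y\<in>Y i. \<exists>x\<in>X i. dY i y (f x) \<le> A)))"

end

theory Submission
  imports Defs "HOL-Analysis.L2_Norm" "HOL-Computational_Algebra.Primes"
begin

text \<open>
  Fix pairwise coprime denominators \<open>D\<^sub>1, \<dots>, D\<^sub>m\<close> of size about \<open>N\<close>, put \<open>Q = D\<^sub>1 \<cdots> D\<^sub>m\<close>,
  and suppose \<open>\<alpha>\<^sub>j\<close> lies within \<open>1/((m+1) N Q)\<close> of a fraction \<open>c\<^sub>j/D\<^sub>j\<close> in lowest terms.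
  By the Chinese remainder theorem the fractions \<open>c\<^sub>j/D\<^sub>j\<close> generate the cyclic group
  \<open>Q\<^sup>-\<^sup>1\<int>/\<int>\<close>, and there are integers \<open>q\<^sub>j\<close> with \<open>q\<^sub>j c\<^sub>k/D\<^sub>k \<equiv> \<delta>\<^sub>j\<^sub>k/D\<^sub>k\<close> mod 1.
  The map \<open>z \<mapsto> (q\<^sub>1 z, \<dots>, q\<^sub>m z, Q z)\<close> of the level \<open>N Q\<close> of the warped cone into the
  torus scaled by \<open>N\<close> is then a quasi-isometry with constants depending only on \<open>m\<close>
  and \<open>D\<^sub>j/N\<close>: pulling back the scaled \<open>\<ell>\<^sup>1\<close> distance gives an admissible metric, so it is
  dominated by the warped metric, and conversely solving for the coefficients \<open>g\<^sub>j\<close> modulo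
  \<open>D\<^sub>j\<close> produces a path of \<open>\<Sum>|g\<^sub>j|\<close> rotations followed by a short segment.

  To get this at infinitely many levels simultaneously take \<open>D\<^sub>j\<close> a power of the
  \<open>j\<close>-th prime \<open>p\<^sub>j\<close> and \<open>\<alpha>\<^sub>j = \<Sum>\<^sub>l b\<^sub>l/D\<^sub>j(l)\<close> with digits \<open>b\<^sub>l \<in> {1, 1 + p\<^sub>j}\<close> and a
  super-exponentially growing scale \<open>N(l)\<close>; the partial sums are the approximations, the
  digits keep their numerators prime to \<open>p\<^sub>j\<close>, and each set of positions carrying the
  digit \<open>1 + p\<^sub>j\<close> gives a different \<open>\<alpha>\<close>.
\<close>

section \<open>Distance to the nearest integer\<close>

definition dist_int :: "real \<Rightarrow> real" where
  "dist_int x = \<bar>x - of_int (round x)\<bar>"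

lemma dist_int_le: "dist_int x \<le> \<bar>x - of_int n\<bar>"
  unfolding dist_int_def by (rule round_diff_minimal)

lemma dist_int_nonneg: "0 \<le> dist_int x"
  by (simp add: dist_int_def)

lemma dist_int_le_abs: "dist_int x \<le> \<bar>x\<bar>"
  using dist_int_le[of x 0] by simp

lemma dist_int_le_half: "dist_int x \<le> 1/2"
  using of_int_round_ge[of x] of_int_round_le[of x] unfolding dist_int_def by arith

lemma dist_int_add_of_int [simp]: "dist_int (x + of_int n) = dist_int x"
proof (rule antisym)
  show "dist_int (x + of_int n) \<le> dist_int x"
    using dist_int_le[of "x + of_int n" "round x + n"] by (simp add: dist_int_def)
  show "dist_int x \<le> dist_int (x + of_int n)"
    using dist_int_le[of x "round (x + of_int n) - n"] by (simp add: dist_int_def)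
qed

lemma dist_int_diff_of_int [simp]: "dist_int (x - of_int n) = dist_int x"
  using dist_int_add_of_int[of x "- n"] by simp

lemma dist_int_minus [simp]: "dist_int (- x) = dist_int x"
proof (rule antisym)
  show "dist_int (- x) \<le> dist_int x"
    using dist_int_le[of "-x" "- round x"] by (simp add: dist_int_def)
  show "dist_int x \<le> dist_int (- x)"
    using dist_int_le[of x "- round (-x)"] by (simp add: dist_int_def)
qed

lemma dist_int_diff_commute: "dist_int (x - y) = dist_int (y - x)"
  using dist_int_minus[of "x - y"] by simp

lemma dist_int_add_le: "dist_int (x + y) \<le> dist_int x + dist_int y"
  using dist_int_le[of "x + y" "round x + round y"] by (simp add: dist_int_def)

lemma dist_int_mult_of_int_le: "dist_int (of_int n * x) \<le> \<bar>of_int n\<bar> * dist_int x"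
proof -
  have "dist_int (of_int n * x) \<le> \<bar>of_int n * x - of_int (n * round x)\<bar>"
    by (rule dist_int_le)
  also have "\<dots> = \<bar>of_int n\<bar> * dist_int x"
    by (simp add: dist_int_def abs_mult[symmetric] algebra_simps)
  finally show ?thesis .
qed

lemma dist_int_Ints: "x \<in> \<int> \<Longrightarrow> dist_int x = 0"
  by (auto elim: Ints_cases simp: dist_int_def)

lemma dist_int_eq_0_imp_eq_0:
  assumes "dist_int x = 0" "-1 < x" "x < 1"
  shows "x = 0"
proof -
  have x: "x = of_int (round x)" using assms(1) by (simp add: dist_int_def)
  with assms(2,3) have "-1 < round x" "round x < 1"
    by (metis of_int_less_iff of_int_minus of_int_1)+
  with x show "x = 0" by simp
qed

section \<open>The circle and the torus\<close>

lemma cdist_eq_dist_int: "cdist x y = dist_int (x - y)"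
proof -
  define d where "d = x - y"
  have frac_d: "frac d = d - of_int (floor d)" by (simp add: frac_def)
  show ?thesis
  proof (cases "frac d \<ge> 1/2")
    case True
    then have "d \<noteq> of_int (floor d)" unfolding frac_d by auto
    then have "ceiling d = floor d + 1"
      by (simp add: ceiling_altdef)
    then have "round d = floor d + 1" using True by (simp add: round_altdef)
    then show ?thesis
      using True unfolding cdist_def dist_int_def d_def[symmetric] frac_d by simp
  next
    case False
    then have "round d = floor d" by (simp add: round_altdef)
    then show ?thesis
      using False frac_ge_0[of d] unfolding cdist_def dist_int_def d_def[symmetric] frac_d by simp
  qed
qed

lemma cdist_frac_frac: "cdist (frac a) (frac b) = dist_int (a - b)"
proof -
  have "frac a - frac b = (a - b) + of_int (floor b - floor a)" by (simp add: frac_def)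
  then show ?thesis by (simp only: cdist_eq_dist_int dist_int_add_of_int)
qed

lemma cdist_frac_right: "cdist y (frac b) = dist_int (y - b)"
proof -
  have "y - frac b = (y - b) + of_int (floor b)" by (simp add: frac_def)
  then show ?thesis by (simp only: cdist_eq_dist_int dist_int_add_of_int)
qed

lemma cdist_nonneg: "0 \<le> cdist x y"
  by (simp add: cdist_eq_dist_int dist_int_nonneg)

lemma cdist_le_half: "cdist x y \<le> 1/2"
  using dist_int_le_half[of "x - y"] by (simp add: cdist_eq_dist_int)

lemma cdist_commute: "cdist x y = cdist y x"
  by (simp add: cdist_eq_dist_int dist_int_diff_commute)

lemma cdist_triangle: "cdist x z \<le> cdist x y + cdist y z"
  using dist_int_add_le[of "x - y" "y - z"] by (simp add: cdist_eq_dist_int)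

lemma cdist_self [simp]: "cdist x x = 0"
  by (simp add: cdist_eq_dist_int dist_int_def)

lemma metric_on_circle_cdist: "metric_on circle cdist"
  unfolding metric_on_def
proof (intro conjI ballI)
  fix x y assume x: "x \<in> circle" and y: "y \<in> circle"
  show "0 \<le> cdist x y" by (rule cdist_nonneg)
  show "cdist x y = cdist y x" by (rule cdist_commute)
  have "-1 < x - y" "x - y < 1" using x y by (auto simp: circle_def)
  then show "cdist x y = 0 \<longleftrightarrow> x = y"
    using dist_int_eq_0_imp_eq_0[of "x - y"] by (auto simp: cdist_eq_dist_int dist_int_def)
next
  fix x y z show "cdist x z \<le> cdist x y + cdist y z" by (rule cdist_triangle)
qed

lemma frac_in_circle: "frac x \<in> circle"
  by (simp add: circle_def frac_lt_1)

lemma frac_circle_eq: "x \<in> circle \<Longrightarrow> frac x = x"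
  by (simp add: circle_def)

lemma frac_frac_add: "frac (frac a + b) = frac (a + b)"
proof -
  have "frac a + b = (a + b) + of_int (- floor a)" by (simp add: frac_def)
  then show ?thesis by (simp only: frac_add_of_int_right)
qed

lemma torus_dist_eq_L2_set: "torus_dist n x y = L2_set (\<lambda>i. cdist (x i) (y i)) {..<n}"
  by (simp add: torus_dist_def L2_set_def)

lemma torus_dist_nonneg: "0 \<le> torus_dist n x y"
  unfolding torus_dist_def by (intro real_sqrt_ge_zero sum_nonneg) simp

lemma torus_dist_le_sum_cdist: "torus_dist n x y \<le> (\<Sum>i<n. cdist (x i) (y i))"
  unfolding torus_dist_eq_L2_set by (rule L2_set_le_sum) (simp add: cdist_nonneg)

lemma sum_cdist_le_torus_dist: "(\<Sum>i<n. cdist (x i) (y i)) \<le> real n * torus_dist n x y"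
proof -
  have "cdist (x i) (y i) \<le> torus_dist n x y" if "i < n" for i
    using that member_le_L2_set[of "{..<n}"] by (simp add: torus_dist_eq_L2_set)
  then have "(\<Sum>i<n. cdist (x i) (y i)) \<le> (\<Sum>i<n. torus_dist n x y)"
    by (intro sum_mono) auto
  then show ?thesis by simp
qed

section \<open>Admissible metrics and the warped metric\<close>

lemma metric_on_triangle:
  "metric_on X \<delta> \<Longrightarrow> x \<in> X \<Longrightarrow> y \<in> X \<Longrightarrow> z \<in> X \<Longrightarrow> \<delta> x z \<le> \<delta> x y + \<delta> y z"
  by (simp add: metric_on_def)

lemma metric_on_self: "metric_on X \<delta> \<Longrightarrow> x \<in> X \<Longrightarrow> \<delta> x x = 0"
  by (simp add: metric_on_def)

lemma metric_on_rotation_power_le: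
  assumes \<delta>: "metric_on circle \<delta>" and step: "\<And>y. y \<in> circle \<Longrightarrow> \<delta> y (frac (y + \<beta>)) \<le> 1"
    and x: "x \<in> circle"
  shows "\<delta> x (frac (x + real n * \<beta>)) \<le> real n"
proof (induction n)
  case 0
  show ?case using \<delta> x by (simp add: frac_circle_eq metric_on_self)
next
  case (Suc n)
  define y where "y = frac (x + real n * \<beta>)"
  have y: "y \<in> circle" by (simp add: y_def frac_in_circle)
  have "frac (x + real (Suc n) * \<beta>) = frac (y + \<beta>)"
    by (simp add: y_def frac_frac_add algebra_simps)
  moreover have "\<delta> x (frac (y + \<beta>)) \<le> \<delta> x y + \<delta> y (frac (y + \<beta>))"
    using metric_on_triangle[OF \<delta> x y frac_in_circle] .
  moreover have "\<delta> y (frac (y + \<beta>)) \<le> 1" using step y .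
  ultimately show ?case using Suc.IH unfolding y_def by simp
qed

context
  fixes m :: nat and \<alpha> :: "nat \<Rightarrow> real" and t :: real and \<delta> :: "real \<Rightarrow> real \<Rightarrow> real"
  assumes adm: "warp_admissible m \<alpha> t \<delta>"
begin

lemma warp_admissible_metric_on: "metric_on circle \<delta>"
  using adm by (simp add: warp_admissible_def)

lemma warp_admissible_le_cdist: "z \<in> circle \<Longrightarrow> z' \<in> circle \<Longrightarrow> \<delta> z z' \<le> t * cdist z z'"
  using adm by (simp add: warp_admissible_def)

lemma warp_admissible_rotation_int_le:
  assumes j: "j < m" and x: "x \<in> circle"
  shows "\<delta> x (frac (x + of_int n * \<alpha> j)) \<le> \<bar>of_int n\<bar>"
proof (cases "n \<ge> 0")
  case True
  have "\<delta> x (frac (x + real (nat n) * \<alpha> j)) \<le> real (nat n)"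
    by (rule metric_on_rotation_power_le[OF warp_admissible_metric_on _ x])
      (use adm j in \<open>auto simp: warp_admissible_def\<close>)
  then show ?thesis using True by simp
next
  case False
  have "\<delta> x (frac (x + real (nat (- n)) * (- \<alpha> j))) \<le> real (nat (- n))"
    by (rule metric_on_rotation_power_le[OF warp_admissible_metric_on _ x])
      (use adm j in \<open>auto simp: warp_admissible_def\<close>)
  then show ?thesis using False by simp
qed

lemma warp_admissible_word_le:
  assumes x: "x \<in> circle" and "k \<le> m"
  shows "\<delta> x (frac (x + (\<Sum>j<k. of_int (g j) * \<alpha> j))) \<le> (\<Sum>j<k. \<bar>of_int (g j)\<bar>)"
  using \<open>k \<le> m\<close>
proof (induction k)
  case 0
  show ?case using warp_admissible_metric_on x by (simp add: frac_circle_eq metric_on_self)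
next
  case (Suc k)
  define y where "y = frac (x + (\<Sum>j<k. of_int (g j) * \<alpha> j))"
  have y: "y \<in> circle" by (simp add: y_def frac_in_circle)
  have "frac (x + (\<Sum>j<Suc k. of_int (g j) * \<alpha> j)) = frac (y + of_int (g k) * \<alpha> k)"
    by (simp add: y_def frac_frac_add algebra_simps)
  moreover have "\<delta> x (frac (y + of_int (g k) * \<alpha> k))
      \<le> \<delta> x y + \<delta> y (frac (y + of_int (g k) * \<alpha> k))"
    using metric_on_triangle[OF warp_admissible_metric_on x y frac_in_circle] .
  moreover have "\<delta> y (frac (y + of_int (g k) * \<alpha> k)) \<le> \<bar>of_int (g k)\<bar>"
    using warp_admissible_rotation_int_le[OF _ y] Suc.prems by simp
  ultimately show ?case using Suc unfolding y_def by simp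
qed

text \<open>A path from \<open>x\<close> to \<open>y\<close>: the rotations \<open>g\<^sub>j \<alpha>\<^sub>j\<close>, then a straight segment.\<close>

lemma warp_admissible_path_le:
  assumes x: "x \<in> circle" and y: "y \<in> circle"
  shows "\<delta> x y \<le> (\<Sum>j<m. \<bar>of_int (g j)\<bar>) + t * dist_int (x + (\<Sum>j<m. of_int (g j) * \<alpha> j) - y)"
proof -
  define p where "p = frac (x + (\<Sum>j<m. of_int (g j) * \<alpha> j))"
  have p: "p \<in> circle" by (simp add: p_def frac_in_circle)
  have "\<delta> x y \<le> \<delta> x p + \<delta> p y"
    using metric_on_triangle[OF warp_admissible_metric_on x p y] .
  moreover have "\<delta> x p \<le> (\<Sum>j<m. \<bar>of_int (g j)\<bar>)"
    unfolding p_def by (rule warp_admissible_word_le[OF x order_refl])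
  moreover have "\<delta> p y \<le> t * cdist p y" using warp_admissible_le_cdist[OF p y] .
  ultimately have "\<delta> x y \<le> (\<Sum>j<m. \<bar>of_int (g j)\<bar>) + t * cdist p y" by linarith
  also have "cdist p y = dist_int (x + (\<Sum>j<m. of_int (g j) * \<alpha> j) - y)"
    unfolding p_def by (simp only: cdist_commute[of _ y] cdist_frac_right dist_int_diff_commute)
  finally show ?thesis .
qed

lemma warp_admissible_le_warped_dist:
  assumes "x \<in> circle" "y \<in> circle"
  shows "\<delta> x y \<le> warped_dist m \<alpha> t x y"
  unfolding warped_dist_def
proof (rule cSup_upper)
  show "\<delta> x y \<in> {\<delta> x y |\<delta>. warp_admissible m \<alpha> t \<delta>}" using adm by blast
  show "bdd_above {\<delta> x y |\<delta>. warp_admissible m \<alpha> t \<delta>}"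
    by (rule bdd_aboveI[of _ "t * cdist x y"]) (use assms in \<open>auto simp: warp_admissible_def\<close>)
qed

end

lemma warped_dist_le:
  assumes "warp_admissible m \<alpha> t \<delta>\<^sub>0" and "\<And>\<delta>. warp_admissible m \<alpha> t \<delta> \<Longrightarrow> \<delta> x y \<le> B"
  shows "warped_dist m \<alpha> t x y \<le> B"
  unfolding warped_dist_def by (rule cSup_least) (use assms in auto)

lemma warp_admissible_cdist:
  assumes "1 \<le> t"
  shows "warp_admissible m \<alpha> t cdist"
  unfolding warp_admissible_def
proof (intro conjI metric_on_circle_cdist ballI allI impI)
  fix z z' show "cdist z z' \<le> t * cdist z z'"
    using mult_right_mono[OF assms cdist_nonneg[of z z']] by simp
next
  fix z j
  show "cdist z (frac (z + \<alpha> j)) \<le> 1" using cdist_le_half[of z "frac (z + \<alpha> j)"] by linarith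
  show "cdist z (frac (z - \<alpha> j)) \<le> 1" using cdist_le_half[of z "frac (z - \<alpha> j)"] by linarith
qed

definition quasi_isometry_on ::
  "'a set \<Rightarrow> ('a \<Rightarrow> 'a \<Rightarrow> real) \<Rightarrow> 'b set \<Rightarrow> ('b \<Rightarrow> 'b \<Rightarrow> real) \<Rightarrow> real \<Rightarrow> real \<Rightarrow> ('a \<Rightarrow> 'b) \<Rightarrow> bool"
where
  "quasi_isometry_on X dX Y dY C A f \<longleftrightarrow> (\<forall>x\<in>X. f x \<in> Y) \<and>
     (\<forall>x\<in>X. \<forall>x'\<in>X. dX x x' / C - A \<le> dY (f x) (f x') \<and> dY (f x) (f x') \<le> C * dX x x' + A) \<and>
     (\<forall>y\<in>Y. \<exists>x\<in>X. dY y (f x) \<le> A)"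

lemma qi_families_iff:
  "qi_families X dX Y dY \<longleftrightarrow>
     (\<exists>C A. C \<ge> 1 \<and> A \<ge> 0 \<and> (\<forall>i. \<exists>f. quasi_isometry_on (X i) (dX i) (Y i) (dY i) C A f))"
  unfolding qi_families_def quasi_isometry_on_def ..

section \<open>Levels at which the rotation numbers are well approximated\<close>

lemma coprime_imp_exists_inverse_mod:
  fixes a b :: int
  assumes "coprime a b"
  shows "\<exists>u. b dvd u * a - 1"
proof -
  obtain u v where "u * a + v * b = gcd a b" using bezout_int by blast
  then have "u * a - 1 = b * (- v)" using assms by (simp add: algebra_simps)
  then show ?thesis by (metis dvdI)
qed

lemma prod_dvd_if_pairwise_coprime:
  fixes D :: "nat \<Rightarrow> int"
  assumes "\<And>j k. j < n \<Longrightarrow> k < n \<Longrightarrow> j \<noteq> k \<Longrightarrow> coprime (D j) (D k)"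
    and "\<And>j. j < n \<Longrightarrow> D j dvd a"
  shows "(\<Prod>k<n. D k) dvd a"
  using assms
proof (induction n)
  case (Suc n)
  have "coprime (\<Prod>k<n. D k) (D n)"
    by (rule prod_coprime_left) (use Suc.prems in auto)
  then have "(\<Prod>k<n. D k) * D n dvd a"
    using Suc by (intro divides_mult) auto
  then show ?case by simp
qed simp

locale coprime_approximation =
  fixes m :: nat and N P :: real and D c :: "nat \<Rightarrow> int" and \<alpha> :: "nat \<Rightarrow> real"
  assumes m_pos: "1 \<le> m" and N_ge_1: "1 \<le> N" and P_ge_1: "1 \<le> P"
    and D_ge: "\<And>j. j < m \<Longrightarrow> N \<le> of_int (D j)"
    and D_le: "\<And>j. j < m \<Longrightarrow> of_int (D j) \<le> P * N"
    and coprime_D: "\<And>j k. j < m \<Longrightarrow> k < m \<Longrightarrow> j \<noteq> k \<Longrightarrow> coprime (D j) (D k)"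
    and coprime_c_D: "\<And>j. j < m \<Longrightarrow> coprime (c j) (D j)"
    and approximation:
      "\<And>j. j < m \<Longrightarrow> (real m + 1) * N * of_int (\<Prod>k<m. D k) * \<bar>\<alpha> j - of_int (c j) / of_int (D j)\<bar> \<le> 1"
begin

definition Q :: int where
  "Q = (\<Prod>k<m. D k)"

definition cofactor :: "nat \<Rightarrow> int" where
  "cofactor j = (\<Prod>k\<in>{..<m}-{j}. D k)"

definition inv_mod :: "nat \<Rightarrow> int" where
  "inv_mod j = (SOME u. D j dvd u * (cofactor j * c j) - 1) mod D j"

text \<open>For \<open>k < m\<close>, \<open>freq k\<close> multiplies \<open>c\<^sub>k/D\<^sub>k\<close> to \<open>1/D\<^sub>k\<close> and every other \<open>c\<^sub>j/D\<^sub>j\<close> to an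
  integer, modulo 1; the last frequency \<open>Q\<close> clears all denominators.\<close>

definition freq :: "nat \<Rightarrow> int" where
  "freq k = (if k < m then cofactor k * inv_mod k else Q)"

definition embedding :: "real \<Rightarrow> nat \<Rightarrow> real" where
  "embedding z = (\<lambda>k. if k < Suc m then frac (of_int (freq k) * z) else 0)"

definition freq_dist :: "real \<Rightarrow> real \<Rightarrow> real" where
  "freq_dist x y = (\<Sum>k<Suc m. dist_int (of_int (freq k) * (x - y)))"

definition approx_error :: "nat \<Rightarrow> real" where
  "approx_error j = \<alpha> j - of_int (c j) / of_int (D j)"

lemma N_pos: "0 < N"
  using N_ge_1 by simp

lemma D_pos: "j < m \<Longrightarrow> 0 < D j"
  using D_ge[of j] N_ge_1 by (metis of_int_0_less_iff order_less_le_trans zero_less_one)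

lemma cofactor_pos: "0 < cofactor j"
  unfolding cofactor_def by (rule prod_pos) (auto intro: D_pos)

lemma Q_pos: "0 < Q"
  unfolding Q_def by (rule prod_pos) (auto intro: D_pos)

lemma Q_eq_D_cofactor: "j < m \<Longrightarrow> Q = D j * cofactor j"
  unfolding Q_def cofactor_def by (rule prod.remove) auto

lemma D_dvd_cofactor: "j < m \<Longrightarrow> k \<noteq> j \<Longrightarrow> D j dvd cofactor k"
  unfolding cofactor_def by (rule dvd_prodI) auto

lemma N_Q_ge_1: "1 \<le> N * of_int Q"
proof -
  have "(1::real) \<le> of_int Q" using Q_pos by simp
  then show ?thesis using N_ge_1 mult_mono[of 1 N 1 "of_int Q"] by simp
qed

lemma N_Q_approx_error_le: "j < m \<Longrightarrow> N * of_int Q * \<bar>approx_error j\<bar> \<le> 1"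
proof -
  assume j: "j < m"
  have "0 \<le> N * of_int Q * \<bar>approx_error j\<bar>" using N_pos Q_pos by simp
  moreover have "(real m + 1) * (N * of_int Q * \<bar>approx_error j\<bar>) \<le> 1"
    using approximation[OF j] unfolding approx_error_def Q_def by (simp add: algebra_simps)
  ultimately show ?thesis
    by (smt (verit) mult_le_cancel_right1 of_nat_0_le_iff)
qed

lemma inv_mod_dvd: "j < m \<Longrightarrow> D j dvd inv_mod j * (cofactor j * c j) - 1"
proof -
  assume j: "j < m"
  have "coprime (cofactor j) (D j)"
    unfolding cofactor_def by (rule prod_coprime_left) (use j coprime_D in auto)
  then have "coprime (cofactor j * c j) (D j)" using coprime_c_D[OF j] by simp
  define u where "u = (SOME u. D j dvd u * (cofactor j * c j) - 1)"
  have u: "D j dvd u * (cofactor j * c j) - 1"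
    unfolding u_def by (rule someI_ex, rule coprime_imp_exists_inverse_mod) fact
  have "(inv_mod j * (cofactor j * c j) - 1) mod D j = (u * (cofactor j * c j) - 1) mod D j"
    unfolding inv_mod_def u_def[symmetric] by (metis mod_diff_left_eq mod_mult_left_eq)
  then show ?thesis using u by (simp add: dvd_eq_mod_eq_0)
qed

lemma inv_mod_bounds: "j < m \<Longrightarrow> 0 \<le> inv_mod j \<and> inv_mod j < D j"
  using D_pos unfolding inv_mod_def by simp

lemma freq_bounds: "k < Suc m \<Longrightarrow> 0 \<le> freq k \<and> freq k \<le> Q"
proof (cases "k < m")
  case True
  then have "0 \<le> cofactor k * inv_mod k \<and> cofactor k * inv_mod k \<le> cofactor k * D k"
    using inv_mod_bounds[OF True] cofactor_pos[of k] by simp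
  then show ?thesis using True Q_eq_D_cofactor[OF True] by (simp add: freq_def mult.commute)
qed (use Q_pos in \<open>simp add: freq_def\<close>)

lemma abs_freq_le: "k < Suc m \<Longrightarrow> \<bar>of_int (freq k) :: real\<bar> \<le> of_int Q"
  using freq_bounds by simp

lemma dist_int_freq_fraction:
  assumes j: "j < m" and k: "k < Suc m"
  shows "dist_int (of_int (freq k) * of_int (c j) / of_int (D j)) \<le> (if k = j then 1 / N else 0)"
proof (cases "k = j")
  case True
  obtain v where v: "inv_mod j * (cofactor j * c j) - 1 = D j * v" using inv_mod_dvd[OF j] by blast
  have "freq k * c j = 1 + D j * v" using v True j by (simp add: freq_def algebra_simps)
  then have "of_int (freq k) * of_int (c j) / of_int (D j) = 1 / of_int (D j) + (of_int v :: real)"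
    using D_pos[OF j] by (simp add: field_simps flip: of_int_mult)
  then have "dist_int (of_int (freq k) * of_int (c j) / of_int (D j)) = dist_int (1 / of_int (D j))"
    by simp
  also have "\<dots> \<le> 1 / of_int (D j)" using dist_int_le_abs[of "1 / of_int (D j)"] D_pos[OF j] by simp
  also have "\<dots> \<le> 1 / N" using D_ge[OF j] N_ge_1 by (simp add: frac_le)
  finally show ?thesis using True by simp
next
  case False
  have "D j dvd freq k"
    using D_dvd_cofactor[OF j] Q_eq_D_cofactor[OF j] False by (simp add: freq_def)
  then have "of_int (freq k * c j) / of_int (D j) \<in> (\<int> :: real set)"
    by (intro of_int_divide_in_Ints) simp
  then show ?thesis using False by (simp add: dist_int_Ints)
qed

lemma embedding_in_torus: "embedding z \<in> torus (Suc m)"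
  by (simp add: embedding_def torus_def frac_lt_1)

lemma cdist_embedding: "k < Suc m \<Longrightarrow> cdist (embedding z k) (embedding z' k) = dist_int (of_int (freq k) * (z - z'))"
  by (simp add: embedding_def cdist_frac_frac algebra_simps)

lemma freq_dist_eq_sum_cdist: "freq_dist z z' = (\<Sum>k<Suc m. cdist (embedding z k) (embedding z' k))"
  unfolding freq_dist_def by (rule sum.cong) (auto simp: cdist_embedding)

lemma torus_dist_embedding_le: "torus_dist (Suc m) (embedding z) (embedding z') \<le> freq_dist z z'"
  unfolding freq_dist_eq_sum_cdist by (rule torus_dist_le_sum_cdist)

lemma freq_dist_le_torus_dist_embedding:
  "freq_dist z z' \<le> (real m + 1) * torus_dist (Suc m) (embedding z) (embedding z')"
  unfolding freq_dist_eq_sum_cdist using sum_cdist_le_torus_dist[where n="Suc m"] by (simp add: add.commute)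

lemma freq_dist_commute: "freq_dist z z' = freq_dist z' z"
  unfolding freq_dist_eq_sum_cdist by (simp only: cdist_commute)

lemma freq_dist_triangle: "freq_dist x z \<le> freq_dist x y + freq_dist y z"
  unfolding freq_dist_eq_sum_cdist sum.distrib[symmetric] by (intro sum_mono cdist_triangle)

lemma freq_dist_le_cdist: "freq_dist x y \<le> (real m + 1) * of_int Q * cdist x y"
proof -
  have "freq_dist x y \<le> (\<Sum>k<Suc m. of_int Q * cdist x y)"
    unfolding freq_dist_def
  proof (rule sum_mono)
    fix k assume "k \<in> {..<Suc m}"
    then have "\<bar>of_int (freq k)\<bar> * dist_int (x - y) \<le> of_int Q * dist_int (x - y)"
      using abs_freq_le[of k] dist_int_nonneg by (intro mult_right_mono) auto
    then show "dist_int (of_int (freq k) * (x - y)) \<le> of_int Q * cdist x y"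
      using dist_int_mult_of_int_le[of "freq k" "x - y"] by (simp add: cdist_eq_dist_int)
  qed
  then show ?thesis by (simp add: mult.assoc add.commute)
qed

lemma freq_dist_rotation: "freq_dist z (frac (z + \<beta>)) = (\<Sum>k<Suc m. dist_int (of_int (freq k) * \<beta>))"
  unfolding freq_dist_def
proof (rule sum.cong)
  fix k
  have "of_int (freq k) * (z - frac (z + \<beta>)) = - (of_int (freq k) * \<beta>) + of_int (freq k * floor (z + \<beta>))"
    by (simp add: frac_def algebra_simps)
  then show "dist_int (of_int (freq k) * (z - frac (z + \<beta>))) = dist_int (of_int (freq k) * \<beta>)"
    by (simp only: dist_int_add_of_int dist_int_minus)
qed simp

text \<open>One rotation by \<open>\<alpha>\<^sub>j\<close> moves only the \<open>j\<close>-th coordinate of the embedding noticeably.\<close>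

lemma N_freq_dist_rotation_le:
  assumes j: "j < m"
  shows "N * freq_dist z (frac (z + \<alpha> j)) \<le> 2" and "N * freq_dist z (frac (z - \<alpha> j)) \<le> 2"
proof -
  let ?e = "approx_error j"
  have "(\<Sum>k<Suc m. dist_int (of_int (freq k) * \<alpha> j))
      \<le> (\<Sum>k<Suc m. (if k = j then 1 / N else 0) + of_int Q * \<bar>?e\<bar>)"
  proof (rule sum_mono)
    fix k assume k: "k \<in> {..<Suc m}"
    have "of_int (freq k) * \<alpha> j = of_int (freq k) * of_int (c j) / of_int (D j) + of_int (freq k) * ?e"
      by (simp add: approx_error_def algebra_simps)
    then have "dist_int (of_int (freq k) * \<alpha> j)
        \<le> dist_int (of_int (freq k) * of_int (c j) / of_int (D j)) + dist_int (of_int (freq k) * ?e)"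
      using dist_int_add_le by simp
    moreover have "dist_int (of_int (freq k) * ?e) \<le> \<bar>of_int (freq k)\<bar> * \<bar>?e\<bar>"
      using dist_int_le_abs[of "of_int (freq k) * ?e"] by (simp add: abs_mult)
    moreover have "\<bar>of_int (freq k)\<bar> * \<bar>?e\<bar> \<le> of_int Q * \<bar>?e\<bar>"
      using abs_freq_le[of k] k by (intro mult_right_mono) auto
    ultimately show "dist_int (of_int (freq k) * \<alpha> j) \<le> (if k = j then 1 / N else 0) + of_int Q * \<bar>?e\<bar>"
      using dist_int_freq_fraction[OF j, of k] k by simp
  qed
  also have "\<dots> = 1 / N + (real m + 1) * of_int Q * \<bar>?e\<bar>"
    using j by (simp add: sum.distrib)
  finally have "N * (\<Sum>k<Suc m. dist_int (of_int (freq k) * \<alpha> j)) \<le> N * (1 / N + (real m + 1) * of_int Q * \<bar>?e\<bar>)"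
    using N_pos by (simp add: mult_left_mono)
  also have "\<dots> = 1 + (real m + 1) * N * of_int Q * \<bar>?e\<bar>"
    using N_pos by (simp add: field_simps)
  also have "\<dots> \<le> 2"
    using approximation[OF j] unfolding approx_error_def Q_def by simp
  finally have plus: "N * (\<Sum>k<Suc m. dist_int (of_int (freq k) * \<alpha> j)) \<le> 2" .
  then show "N * freq_dist z (frac (z + \<alpha> j)) \<le> 2"
    by (simp only: freq_dist_rotation)
  from plus show "N * freq_dist z (frac (z - \<alpha> j)) \<le> 2"
    by (simp only: freq_dist_rotation diff_conv_add_uminus mult_minus_right dist_int_minus)
qed

text \<open>An admissible metric witnessing that the warped metric dominates \<open>N\<close> times \<open>freq_dist\<close>.\<close>

definition test_metric :: "real \<Rightarrow> real \<Rightarrow> real" where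
  "test_metric x y = max (cdist x y) (N * freq_dist x y / (real m + 2))"

lemma test_metric_triangle: "test_metric x z \<le> test_metric x y + test_metric y z"
proof -
  have "N * freq_dist x z \<le> N * freq_dist x y + N * freq_dist y z"
    using mult_left_mono[OF freq_dist_triangle, of N x z y] N_pos by (simp add: distrib_left)
  then have "N * freq_dist x z / (real m + 2) \<le> N * freq_dist x y / (real m + 2) + N * freq_dist y z / (real m + 2)"
    by (simp add: add_divide_distrib[symmetric] divide_right_mono)
  then show ?thesis
    using cdist_triangle[of x z y] unfolding test_metric_def by linarith
qed

lemma metric_on_test_metric: "metric_on circle test_metric"
  unfolding metric_on_def
proof (intro conjI ballI)
  fix x y assume x: "x \<in> circle" and y: "y \<in> circle"
  show "0 \<le> test_metric x y" using cdist_nonneg[of x y] unfolding test_metric_def by linarith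
  show "test_metric x y = test_metric y x"
    unfolding test_metric_def by (simp only: cdist_commute freq_dist_commute)
  show "test_metric x y = 0 \<longleftrightarrow> x = y"
  proof
    assume "test_metric x y = 0"
    then have "cdist x y = 0"
      using cdist_nonneg[of x y] unfolding test_metric_def by (metis max.cobounded1 order_antisym)
    then show "x = y" using metric_on_circle_cdist x y unfolding metric_on_def by blast
  qed (simp add: test_metric_def freq_dist_def dist_int_def)
next
  fix x y z show "test_metric x z \<le> test_metric x y + test_metric y z"
    by (rule test_metric_triangle)
qed

lemma test_metric_le_cdist: "test_metric z z' \<le> N * of_int Q * cdist z z'"
proof -
  have c: "0 \<le> cdist z z'" by (rule cdist_nonneg)
  have "cdist z z' \<le> N * of_int Q * cdist z z'"
    using mult_right_mono[OF N_Q_ge_1 c] by simp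
  moreover have "N * freq_dist z z' \<le> (real m + 2) * (N * of_int Q * cdist z z')"
  proof -
    have "N * freq_dist z z' \<le> N * ((real m + 1) * of_int Q * cdist z z')"
      using mult_left_mono[OF freq_dist_le_cdist] N_pos by simp
    also have "\<dots> \<le> (real m + 2) * (N * of_int Q * cdist z z')"
      using N_pos Q_pos c by (simp add: mult_right_mono algebra_simps)
    finally show ?thesis .
  qed
  ultimately show ?thesis
    unfolding test_metric_def by (simp add: pos_divide_le_eq mult.commute)
qed

lemma warp_admissible_test_metric: "warp_admissible m \<alpha> (N * of_int Q) test_metric"
  unfolding warp_admissible_def
proof (intro conjI metric_on_test_metric ballI allI impI)
  fix z z' show "test_metric z z' \<le> N * of_int Q * cdist z z'" by (rule test_metric_le_cdist)
next
  fix z j assume j: "j < m"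
  have "cdist z z' \<le> 1" for z' using cdist_le_half[of z z'] by linarith
  then show "test_metric z (frac (z + \<alpha> j)) \<le> 1" "test_metric z (frac (z - \<alpha> j)) \<le> 1"
    using N_freq_dist_rotation_le[OF j, of z] unfolding test_metric_def by (simp_all add: pos_divide_le_eq)
qed

lemma freq_dist_le_warped_dist:
  assumes "x \<in> circle" "y \<in> circle"
  shows "N * freq_dist x y \<le> (real m + 2) * warped_dist m \<alpha> (N * of_int Q) x y"
proof -
  have "N * freq_dist x y / (real m + 2) \<le> test_metric x y" unfolding test_metric_def by simp
  also have "\<dots> \<le> warped_dist m \<alpha> (N * of_int Q) x y"
    by (rule warp_admissible_le_warped_dist[OF warp_admissible_test_metric assms])
  finally show ?thesis by (simp add: pos_divide_le_eq mult.commute)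
qed

text \<open>
  Coefficients \<open>g\<^sub>j \<equiv> inv_mod j \<cdot> round (Q W)\<close> (mod \<open>D\<^sub>j\<close>), reduced to \<open>|g\<^sub>j| \<le> D\<^sub>j/2\<close>, for which
  \<open>\<Sum>\<^sub>j g\<^sub>j c\<^sub>j/D\<^sub>j \<equiv> round (Q W)/Q\<close> mod 1 by the Chinese remainder theorem.
\<close>

definition word :: "real \<Rightarrow> nat \<Rightarrow> int" where
  "word W j = inv_mod j * round (of_int Q * W)
     - D j * round (of_int (inv_mod j * round (of_int Q * W)) / of_int (D j) :: real)"

lemma D_dvd_diff_combination:
  assumes j: "j < m" and g: "D j dvd g j - inv_mod j * A"
  shows "D j dvd A - (\<Sum>k<m. g k * cofactor k * c k)"
proof -
  obtain r where "g j - inv_mod j * A = D j * r" using g by blast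
  then have r: "g j = inv_mod j * A + D j * r" by simp
  obtain v where "inv_mod j * (cofactor j * c j) - 1 = D j * v" using inv_mod_dvd[OF j] by blast
  then have v: "inv_mod j * (cofactor j * c j) = 1 + D j * v" by simp
  have "A - g j * cofactor j * c j = A - A * (inv_mod j * (cofactor j * c j)) - D j * r * cofactor j * c j"
    unfolding r by (simp add: algebra_simps)
  also have "\<dots> = D j * (- r * cofactor j * c j - A * v)"
    unfolding v by (simp add: algebra_simps)
  finally have "D j dvd A - g j * cofactor j * c j" by simp
  moreover have "D j dvd (\<Sum>k\<in>{..<m}-{j}. g k * cofactor k * c k)"
    by (rule dvd_sum) (use D_dvd_cofactor[OF j] in auto)
  ultimately have "D j dvd (A - g j * cofactor j * c j) - (\<Sum>k\<in>{..<m}-{j}. g k * cofactor k * c k)"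
    by (rule dvd_diff)
  moreover have "(\<Sum>k<m. g k * cofactor k * c k) = g j * cofactor j * c j + (\<Sum>k\<in>{..<m}-{j}. g k * cofactor k * c k)"
    using j by (intro sum.remove) auto
  ultimately show ?thesis by (simp add: algebra_simps)
qed

lemma word_combination:
  fixes W :: real
  obtains b :: int where "(\<Sum>j<m. of_int (word W j) * (of_int (c j) / of_int (D j)))
    = of_int (round (of_int Q * W)) / of_int Q - (of_int b :: real)"
proof -
  let ?A = "round (of_int Q * W)"
  have "(\<Prod>k<m. D k) dvd ?A - (\<Sum>k<m. word W k * cofactor k * c k)"
    by (rule prod_dvd_if_pairwise_coprime[OF coprime_D D_dvd_diff_combination]) (auto simp: word_def)
  then obtain b where b: "?A - (\<Sum>k<m. word W k * cofactor k * c k) = Q * b"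
    unfolding Q_def[symmetric] by blast
  have "(\<Sum>j<m. of_int (word W j) * (of_int (c j) / of_int (D j)))
      = (\<Sum>j<m. of_int (word W j * cofactor j * c j) / (of_int Q :: real))"
  proof (intro sum.cong refl)
    fix j assume "j \<in> {..<m}"
    then have "j < m" by simp
    then have "D j \<noteq> 0" "cofactor j \<noteq> 0" "Q = D j * cofactor j"
      using D_pos[of j] cofactor_pos[of j] Q_eq_D_cofactor[of j] by auto
    then show "of_int (word W j) * (of_int (c j) / of_int (D j))
        = of_int (word W j * cofactor j * c j) / (of_int Q :: real)"
      by (simp add: field_simps)
  qed
  also have "\<dots> = of_int ?A / of_int Q - of_int b"
    using Q_pos arg_cong[OF b, of "\<lambda>x. of_int x / (of_int Q :: real)"]
    by (simp add: sum_divide_distrib[symmetric] field_simps)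
  finally show ?thesis by (rule that)
qed

lemma abs_word_le:
  assumes j: "j < m"
  shows "\<bar>of_int (word W j)\<bar> \<le> P * N * (dist_int (of_int (freq j) * W) + dist_int (of_int Q * W))"
proof -
  define \<sigma> where "\<sigma> = of_int Q * W - of_int (round (of_int Q * W))"
  define X where "X = of_int (inv_mod j * round (of_int Q * W)) / (of_int (D j) :: real)"
  have Dj: "(0::real) < of_int (D j)" using D_pos[OF j] by simp
  have "\<bar>of_int (word W j)\<bar> = of_int (D j) * dist_int X"
  proof -
    have "of_int (word W j) = of_int (D j) * (X - of_int (round X))"
      unfolding word_def X_def using Dj by (simp add: field_simps)
    then show ?thesis using Dj by (simp add: dist_int_def abs_mult)
  qed
  also have "\<dots> \<le> (P * N) * (dist_int (of_int (freq j) * W) + \<bar>\<sigma>\<bar>)"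
  proof (rule mult_mono[OF D_le[OF j] _ _ dist_int_nonneg])
    have "X = of_int (freq j) * W + (- (of_int (freq j) / of_int Q * \<sigma>))"
      using j Dj Q_pos cofactor_pos[of j]
      unfolding X_def \<sigma>_def freq_def Q_eq_D_cofactor[OF j] by (simp add: field_simps)
    moreover have "\<bar>of_int (freq j) / of_int Q * \<sigma>\<bar> \<le> \<bar>\<sigma>\<bar>"
      using mult_right_mono[OF abs_freq_le[of j] abs_ge_zero[of \<sigma>]] j Q_pos
      by (simp add: abs_mult divide_le_eq mult.commute)
    ultimately show "dist_int X \<le> dist_int (of_int (freq j) * W) + \<bar>\<sigma>\<bar>"
      using dist_int_add_le dist_int_le_abs dist_int_minus by (smt (verit))
  qed (use P_ge_1 N_pos in simp)
  finally show ?thesis unfolding \<sigma>_def dist_int_def by simp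
qed

lemma N_Q_error_sum_le: "N * of_int Q * \<bar>\<Sum>j<m. of_int (g j) * approx_error j\<bar> \<le> (\<Sum>j<m. \<bar>of_int (g j)\<bar>)"
proof -
  have "N * of_int Q * \<bar>\<Sum>j<m. of_int (g j) * approx_error j\<bar>
      \<le> N * of_int Q * (\<Sum>j<m. \<bar>of_int (g j)\<bar> * \<bar>approx_error j\<bar>)"
    using N_pos Q_pos sum_abs[of "\<lambda>j. of_int (g j) * approx_error j" "{..<m}"]
    by (simp add: abs_mult)
  also have "\<dots> = (\<Sum>j<m. \<bar>of_int (g j)\<bar> * (N * of_int Q * \<bar>approx_error j\<bar>))"
    by (simp add: sum_distrib_left algebra_simps)
  also have "\<dots> \<le> (\<Sum>j<m. \<bar>of_int (g j)\<bar>)"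
    using N_Q_approx_error_le by (intro sum_mono) (simp add: mult_left_le)
  finally show ?thesis .
qed

lemma N_Q_dist_int_word_le:
  "N * of_int Q * dist_int (x + (\<Sum>j<m. of_int (word (y - x) j) * \<alpha> j) - y)
    \<le> (\<Sum>j<m. \<bar>of_int (word (y - x) j)\<bar>) + N * dist_int (of_int Q * (y - x))"
proof -
  define W where "W = y - x"
  define A where "A = round (of_int Q * W)"
  define \<sigma> where "\<sigma> = of_int Q * W - of_int A"
  define E where "E = (\<Sum>j<m. of_int (word W j) * approx_error j)"
  have Q: "(0::real) < of_int Q" using Q_pos by simp
  obtain b where b: "(\<Sum>j<m. of_int (word W j) * (of_int (c j) / of_int (D j)))
      = of_int A / of_int Q - (of_int b :: real)"
    unfolding A_def using word_combination[of W] .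
  have "(\<Sum>j<m. of_int (word W j) * \<alpha> j)
      = (\<Sum>j<m. of_int (word W j) * (of_int (c j) / of_int (D j))) + E"
    unfolding E_def approx_error_def by (simp add: sum.distrib[symmetric] algebra_simps)
  also have "\<dots> = y - x - \<sigma> / of_int Q + E - of_int b"
    unfolding b using Q by (simp add: \<sigma>_def W_def field_simps)
  finally have "x + (\<Sum>j<m. of_int (word W j) * \<alpha> j) - y = (E - \<sigma> / of_int Q) - of_int b"
    by simp
  then have "dist_int (x + (\<Sum>j<m. of_int (word W j) * \<alpha> j) - y) = dist_int (E - \<sigma> / of_int Q)"
    by (simp only: dist_int_diff_of_int)
  also have "\<dots> \<le> \<bar>E\<bar> + \<bar>\<sigma>\<bar> / of_int Q"
    using dist_int_le_abs[of "E - \<sigma> / of_int Q"] abs_triangle_ineq4[of E "\<sigma> / of_int Q"] Q by simp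
  finally have "N * of_int Q * dist_int (x + (\<Sum>j<m. of_int (word W j) * \<alpha> j) - y)
      \<le> N * of_int Q * (\<bar>E\<bar> + \<bar>\<sigma>\<bar> / of_int Q)"
    using N_pos Q by (simp add: mult_left_mono)
  also have "\<dots> = N * of_int Q * \<bar>E\<bar> + N * \<bar>\<sigma>\<bar>"
    using Q by (simp add: field_simps)
  finally have "N * of_int Q * dist_int (x + (\<Sum>j<m. of_int (word W j) * \<alpha> j) - y)
      \<le> N * of_int Q * \<bar>E\<bar> + N * \<bar>\<sigma>\<bar>" .
  moreover have "N * of_int Q * \<bar>E\<bar> \<le> (\<Sum>j<m. \<bar>of_int (word W j)\<bar>)"
    unfolding E_def by (rule N_Q_error_sum_le)
  moreover have "N * \<bar>\<sigma>\<bar> = N * dist_int (of_int Q * W)" by (simp add: \<sigma>_def A_def dist_int_def)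
  ultimately show ?thesis unfolding W_def by linarith
qed

lemma sum_abs_word_le:
  "(\<Sum>j<m. \<bar>of_int (word W j)\<bar>)
    \<le> P * N * ((\<Sum>j<m. dist_int (of_int (freq j) * W)) + real m * dist_int (of_int Q * W))"
proof -
  have "(\<Sum>j<m. \<bar>of_int (word W j)\<bar>)
      \<le> (\<Sum>j<m. P * N * (dist_int (of_int (freq j) * W) + dist_int (of_int Q * W)))"
    by (intro sum_mono abs_word_le) simp
  then show ?thesis by (simp add: sum_distrib_left sum.distrib algebra_simps)
qed

lemma freq_dist_eq:
  "freq_dist x y = (\<Sum>j<m. dist_int (of_int (freq j) * (y - x))) + dist_int (of_int Q * (y - x))"
proof -
  have "freq_dist x y = (\<Sum>k<Suc m. dist_int (of_int (freq k) * (y - x)))"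
    unfolding freq_dist_def by (intro sum.cong refl) (metis dist_int_minus minus_diff_eq mult_minus_right)
  then show ?thesis by (simp add: freq_def)
qed

lemma warp_admissible_le_freq_dist:
  assumes adm: "warp_admissible m \<alpha> (N * of_int Q) \<delta>" and x: "x \<in> circle" and y: "y \<in> circle"
  shows "\<delta> x y \<le> (2 * real m * P + 1) * N * freq_dist x y"
proof -
  define S where "S = (\<Sum>j<m. dist_int (of_int (freq j) * (y - x)))"
  define \<sigma> where "\<sigma> = dist_int (of_int Q * (y - x))"
  define G where "G = (\<Sum>j<m. \<bar>of_int (word (y - x) j) :: real\<bar>)"
  have "0 \<le> S" unfolding S_def by (intro sum_nonneg dist_int_nonneg)
  have "\<delta> x y \<le> G + N * of_int Q * dist_int (x + (\<Sum>j<m. of_int (word (y - x) j) * \<alpha> j) - y)"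
    unfolding G_def by (rule warp_admissible_path_le[OF adm x y])
  also have "\<dots> \<le> 2 * G + N * \<sigma>"
    using N_Q_dist_int_word_le[of x y] unfolding G_def \<sigma>_def by linarith
  also have "\<dots> \<le> 2 * (P * N * (S + real m * \<sigma>)) + N * \<sigma>"
    using sum_abs_word_le[of "y - x"] unfolding G_def S_def \<sigma>_def by linarith
  also have "\<dots> \<le> (2 * real m * P + 1) * N * (S + \<sigma>)"
  proof -
    have "2 * P * N * S \<le> 2 * real m * P * N * S"
      using m_pos P_ge_1 N_pos \<open>0 \<le> S\<close> by (intro mult_right_mono) (auto simp: mult_le_cancel_right1)
    moreover have "0 \<le> N * S" using N_pos \<open>0 \<le> S\<close> by simp
    ultimately show ?thesis by (simp add: algebra_simps)
  qed
  finally show ?thesis unfolding freq_dist_eq S_def \<sigma>_def .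
qed

lemma warped_dist_le_freq_dist:
  assumes "x \<in> circle" "y \<in> circle"
  shows "warped_dist m \<alpha> (N * of_int Q) x y \<le> (2 * real m * P + 1) * N * freq_dist x y"
  by (rule warped_dist_le[OF warp_admissible_cdist[OF N_Q_ge_1] warp_admissible_le_freq_dist[OF _ assms]])

lemma cdist_embedding_frac: "k < Suc m \<Longrightarrow> cdist v (embedding (frac X) k) = dist_int (v - of_int (freq k) * X)"
proof -
  assume k: "k < Suc m"
  have "v - of_int (freq k) * frac X = (v - of_int (freq k) * X) + of_int (freq k * floor X)"
    by (simp add: frac_def algebra_simps)
  then show ?thesis using k by (simp only: embedding_def cdist_frac_right if_True dist_int_add_of_int)
qed

lemma D_dvd_inv_mod_combination:
  assumes j: "j < m"
  shows "D j dvd inv_mod j * (\<Sum>l<m. cofactor l * c l * b l) - b j"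
proof -
  have "(\<Sum>l<m. cofactor l * c l * b l) = cofactor j * c j * b j + (\<Sum>l\<in>{..<m}-{j}. cofactor l * c l * b l)"
    using j by (intro sum.remove) auto
  then have "inv_mod j * (\<Sum>l<m. cofactor l * c l * b l) - b j
      = (inv_mod j * (cofactor j * c j) - 1) * b j + inv_mod j * (\<Sum>l\<in>{..<m}-{j}. cofactor l * c l * b l)"
    by (simp add: algebra_simps)
  moreover have "D j dvd (\<Sum>l\<in>{..<m}-{j}. cofactor l * c l * b l)"
    by (rule dvd_sum) (use D_dvd_cofactor[OF j] in auto)
  ultimately show ?thesis using inv_mod_dvd[OF j] by simp
qed

text \<open>A point whose embedding is \<open>1/N\<close>-close to \<open>y\<close> in every coordinate.\<close>

definition preimage_num :: "(nat \<Rightarrow> real) \<Rightarrow> nat \<Rightarrow> int" where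
  "preimage_num y j = floor (of_int (D j) * (y j - of_int (freq j) * y m / of_int Q))"

definition preimage :: "(nat \<Rightarrow> real) \<Rightarrow> real" where
  "preimage y = (of_int (\<Sum>l<m. cofactor l * c l * preimage_num y l) + y m) / of_int Q"

lemma cdist_embedding_preimage_last: "cdist (y m) (embedding (frac (preimage y)) m) = 0"
proof -
  have "y m - of_int (freq m) * preimage y = of_int (- (\<Sum>l<m. cofactor l * c l * preimage_num y l))"
    using Q_pos by (simp add: freq_def preimage_def field_simps)
  then show ?thesis by (simp only: cdist_embedding_frac[of m] lessI dist_int_Ints Ints_of_int)
qed

lemma cdist_embedding_preimage:
  assumes j: "j < m"
  shows "cdist (y j) (embedding (frac (preimage y)) j) \<le> 1 / N"
proof -
  define u where "u = y j - of_int (freq j) * y m / of_int Q"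
  define a where "a = (\<Sum>l<m. cofactor l * c l * preimage_num y l)"
  have Dj: "(0::real) < of_int (D j)" using D_pos[OF j] by simp
  have "D j dvd inv_mod j * a - preimage_num y j"
    unfolding a_def by (rule D_dvd_inv_mod_combination[OF j])
  then obtain v where "inv_mod j * a - preimage_num y j = D j * v" by blast
  then have v: "inv_mod j * a = preimage_num y j + D j * v" by simp
  have ratio: "of_int (freq j) / of_int Q = of_int (inv_mod j) / (of_int (D j) :: real)"
    using j Dj cofactor_pos[of j] by (simp add: freq_def Q_eq_D_cofactor[OF j])
  have "of_int (freq j) * preimage y = of_int (freq j) / of_int Q * of_int a + of_int (freq j) * y m / of_int Q"
    unfolding preimage_def a_def[symmetric] by (simp add: algebra_simps add_divide_distrib)
  also have "\<dots> = of_int (inv_mod j * a) / of_int (D j) + (y j - u)"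
    unfolding ratio u_def by simp
  also have "of_int (inv_mod j * a) / of_int (D j) = of_int (preimage_num y j) / of_int (D j) + (of_int v :: real)"
    unfolding v using Dj by (simp add: add_divide_distrib)
  finally have "y j - of_int (freq j) * preimage y = (u - of_int (preimage_num y j) / of_int (D j)) - of_int v"
    by simp
  then have "cdist (y j) (embedding (frac (preimage y)) j) = dist_int (u - of_int (preimage_num y j) / of_int (D j))"
    using cdist_embedding_frac[of j] j by simp
  also have "\<dots> \<le> \<bar>u - of_int (preimage_num y j) / of_int (D j)\<bar>"
    by (rule dist_int_le_abs)
  also have "\<dots> \<le> 1 / of_int (D j)"
  proof -
    have "of_int (preimage_num y j) \<le> of_int (D j) * u" "of_int (D j) * u < of_int (preimage_num y j) + 1"
      unfolding preimage_num_def u_def by linarith+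
    moreover have "u - of_int (preimage_num y j) / of_int (D j) = (of_int (D j) * u - of_int (preimage_num y j)) / of_int (D j)"
      using Dj by (simp add: field_simps)
    ultimately show ?thesis using Dj by (simp add: divide_right_mono)
  qed
  also have "\<dots> \<le> 1 / N" using D_ge[OF j] N_ge_1 by (simp add: frac_le)
  finally show ?thesis .
qed

lemma torus_dist_embedding_preimage_le:
  "N * torus_dist (Suc m) y (embedding (frac (preimage y))) \<le> real m + 1"
proof -
  have "torus_dist (Suc m) y (embedding (frac (preimage y))) \<le> (\<Sum>k<Suc m. 1 / N)"
  proof (rule order_trans[OF torus_dist_le_sum_cdist sum_mono])
    fix k assume "k \<in> {..<Suc m}"
    then consider "k < m" | "k = m" by fastforce
    then show "cdist (y k) (embedding (frac (preimage y)) k) \<le> 1 / N"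
      by cases (use cdist_embedding_preimage cdist_embedding_preimage_last N_pos in auto)
  qed
  then show ?thesis using N_pos by (simp add: field_simps)
qed

lemma level_quasi_isometric:
  assumes C1: "(2 * real m * P + 1) * (real m + 1) \<le> C" and C2: "real m + 2 \<le> C"
  shows "quasi_isometry_on circle (warped_dist m \<alpha> (N * of_int Q))
    (torus (Suc m)) (\<lambda>x y. N * torus_dist (Suc m) x y) C (real m + 1) embedding"
  unfolding quasi_isometry_on_def
proof (intro conjI ballI)
  fix x x' assume x: "x \<in> circle" and x': "x' \<in> circle"
  let ?W = "warped_dist m \<alpha> (N * of_int Q) x x'"
  let ?T = "torus_dist (Suc m) (embedding x) (embedding x')"
  have W_ge: "N * freq_dist x x' \<le> (real m + 2) * ?W" by (rule freq_dist_le_warped_dist[OF x x'])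
  have W_le: "?W \<le> (2 * real m * P + 1) * N * freq_dist x x'" by (rule warped_dist_le_freq_dist[OF x x'])
  have T_le: "?T \<le> freq_dist x x'" by (rule torus_dist_embedding_le)
  have T_ge: "freq_dist x x' \<le> (real m + 1) * ?T" by (rule freq_dist_le_torus_dist_embedding)
  have W: "0 \<le> ?W"
    using warp_admissible_le_warped_dist[OF warp_admissible_cdist[OF N_Q_ge_1, of m \<alpha>] x x'] cdist_nonneg[of x x']
    by linarith
  have "N * ?T \<le> N * freq_dist x x'" using T_le N_pos by simp
  also have "\<dots> \<le> C * ?W" using W_ge mult_right_mono[OF C2 W] by linarith
  finally show "N * ?T \<le> C * ?W + (real m + 1)" by simp
  have "?W \<le> (2 * real m * P + 1) * (real m + 1) * (N * ?T)"
    using W_le mult_left_mono[OF T_ge, of "(2 * real m * P + 1) * N"] N_pos P_ge_1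
    by (simp add: algebra_simps)
  also have "\<dots> \<le> C * (N * ?T)"
    using C1 N_pos torus_dist_nonneg by (intro mult_right_mono) auto
  finally have "?W / C \<le> N * ?T"
    using C2 by (simp add: pos_divide_le_eq mult.commute)
  then show "?W / C - (real m + 1) \<le> N * ?T" by simp
next
  fix y :: "nat \<Rightarrow> real"
  show "\<exists>x\<in>circle. N * torus_dist (Suc m) y (embedding x) \<le> real m + 1"
    using frac_in_circle torus_dist_embedding_preimage_le by blast
qed (rule embedding_in_torus)

end

section \<open>Rotation numbers that are well approximated at every level\<close>

lemma doubling_inverse_summable:
  fixes f :: "nat \<Rightarrow> nat"
  assumes pos: "\<And>i. 1 \<le> f i" and doubling: "\<And>i. 2 * f i \<le> f (Suc i)"
  shows "summable (\<lambda>n. 1 / real (f (n + a)))" and "(\<Sum>n. 1 / real (f (n + a))) \<le> 2 / real (f a)"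
proof -
  have "2 ^ n * f a \<le> f (n + a)" for n
  proof (induction n)
    case (Suc n)
    then show ?case using doubling[of "n + a"] by simp
  qed simp
  then have "real (2 ^ n * f a) \<le> real (f (n + a))" for n
    by (simp only: of_nat_le_iff)
  then have "2 ^ n * real (f a) \<le> real (f (n + a))" for n
    by simp
  then have le_geometric: "1 / real (f (n + a)) \<le> 1 / real (f a) * (1/2) ^ n" for n
    using pos[of a] frac_le[of 1 1 "2 ^ n * real (f a)" "real (f (n + a))"]
    by (simp add: power_one_over mult.commute)
  have geometric: "summable (\<lambda>n. 1 / real (f a) * (1/2::real) ^ n)"
    by (intro summable_mult summable_geometric) simp
  show summable: "summable (\<lambda>n. 1 / real (f (n + a)))"
    by (rule summable_comparison_test'[OF geometric, of 0]) (use le_geometric in auto)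
  have "(\<Sum>n. 1 / real (f (n + a))) \<le> (\<Sum>n. 1 / real (f a) * (1/2::real) ^ n)"
    by (rule suminf_le[OF le_geometric summable geometric])
  also have "\<dots> = 1 / real (f a) * (\<Sum>n. (1/2::real) ^ n)"
    by (intro suminf_mult summable_geometric) simp
  also have "\<dots> = 2 / real (f a)"
    using suminf_geometric[of "1/2::real"] by simp
  finally show "(\<Sum>n. 1 / real (f (n + a))) \<le> 2 / real (f a)" .
qed

lemma uncountable_UNIV_nat_set: "uncountable (UNIV :: nat set set)"
  using Cantors_theorem[of "UNIV :: nat set"] by (auto simp: uncountable_def)

locale prime_digit_construction =
  fixes m :: nat and p :: "nat \<Rightarrow> nat"
  assumes m_pos: "1 \<le> m" and prime_p: "\<And>j. prime (p j)" and inj_p: "inj p"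
begin

definition prime_prod :: nat where
  "prime_prod = (\<Prod>j<m. p j)"

lemma p_ge_2: "2 \<le> p j"
  using prime_p[of j] prime_ge_2_nat by blast

lemma prime_prod_ge_1: "1 \<le> prime_prod"
  unfolding prime_prod_def by (rule prod_ge_1) (use p_ge_2 in \<open>auto intro: order.trans[OF _ p_ge_2]\<close>)

lemma p_le_prime_prod: "j < m \<Longrightarrow> p j \<le> prime_prod"
proof -
  assume "j < m"
  then have "p j dvd prime_prod" unfolding prime_prod_def by (intro dvd_prodI) auto
  then show ?thesis using prime_prod_ge_1 by (intro dvd_imp_le) auto
qed

text \<open>The growth rate of the scale is what makes the tail of each series small
  enough in \<open>approximation_at_level\<close>.\<close>

fun scale :: "nat \<Rightarrow> nat" where
  "scale 0 = 8 * prime_prod"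
| "scale (Suc i) = 4 * (m + 1) * prime_prod ^ (m + 1) * scale i ^ (m + 1)"

lemma scale_ge_1: "1 \<le> scale i"
  using prime_prod_ge_1 by (induction i) simp_all

lemma scale_Suc_ge: "8 * prime_prod * scale i \<le> scale (Suc i)"
proof -
  have "prime_prod \<le> prime_prod ^ (m + 1)" "scale i \<le> scale i ^ (m + 1)" "8 \<le> 4 * (m + 1)"
    using prime_prod_ge_1 scale_ge_1[of i] m_pos by (simp_all add: self_le_power)
  then have "8 * prime_prod * scale i \<le> 4 * (m + 1) * prime_prod ^ (m + 1) * scale i ^ (m + 1)"
    by (intro mult_mono) auto
  then show ?thesis by simp
qed

lemma scale_doubling: "2 * scale i \<le> scale (Suc i)"
proof -
  have "2 * scale i \<le> 8 * prime_prod * scale i" using prime_prod_ge_1 by simp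
  then show ?thesis using scale_Suc_ge by (rule le_trans)
qed

lemma prime_prod_scale_less: "prime_prod * scale i < scale (Suc i)"
proof -
  have "prime_prod * scale i < 8 * prime_prod * scale i" using prime_prod_ge_1 scale_ge_1[of i] by simp
  then show ?thesis using scale_Suc_ge by (rule less_le_trans)
qed

lemma strict_mono_scale: "strict_mono scale"
  unfolding strict_mono_Suc_iff
proof
  fix i
  have "scale i \<le> prime_prod * scale i" using prime_prod_ge_1 by simp
  then show "scale i < scale (Suc i)" using prime_prod_scale_less by (rule le_less_trans)
qed

definition expo :: "nat \<Rightarrow> nat \<Rightarrow> nat" where
  "expo i j = (LEAST k. scale i \<le> p j ^ k)"

definition den :: "nat \<Rightarrow> nat \<Rightarrow> nat" where
  "den i j = p j ^ expo i j"

lemma exists_power_ge_scale: "\<exists>k. scale i \<le> p j ^ k"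
proof -
  have "scale i < 2 ^ scale i" by (rule less_exp)
  also have "\<dots> \<le> p j ^ scale i" using p_ge_2[of j] by (rule power_mono) simp
  finally show ?thesis by (intro exI[of _ "scale i"]) simp
qed

lemma den_ge: "scale i \<le> den i j"
  unfolding den_def expo_def by (rule LeastI_ex[OF exists_power_ge_scale])

lemma den_ge_1: "1 \<le> den i j"
  using den_ge[of i j] scale_ge_1[of i] by simp

lemma den_le: "den i j \<le> p j * scale i"
proof (cases "expo i j")
  case (Suc k)
  have "\<not> scale i \<le> p j ^ k"
  proof
    assume "scale i \<le> p j ^ k"
    then have "expo i j \<le> k" unfolding expo_def by (rule Least_le)
    then show False using Suc by simp
  qed
  then show ?thesis using Suc by (simp add: den_def)
qed (use scale_ge_1[of i] p_ge_2[of j] in \<open>simp add: den_def\<close>)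

lemma den_le_prime_prod: "j < m \<Longrightarrow> den i j \<le> prime_prod * scale i"
  using den_le[of i j] p_le_prime_prod[of j] by (meson le_trans mult_le_mono1)

lemma strict_mono_expo: "j < m \<Longrightarrow> strict_mono (\<lambda>i. expo i j)"
  unfolding strict_mono_Suc_iff
proof
  fix i assume j: "j < m"
  have "p j ^ expo i j < p j ^ expo (Suc i) j"
    using den_le_prime_prod[OF j, of i] prime_prod_scale_less[of i] den_ge[of "Suc i" j]
    unfolding den_def by linarith
  then show "expo i j < expo (Suc i) j" using p_ge_2[of j] by simp
qed

definition digit :: "nat set \<Rightarrow> nat \<Rightarrow> nat \<Rightarrow> nat" where
  "digit s l j = 1 + (if l \<in> s then p j else 0)"

definition summand :: "nat set \<Rightarrow> nat \<Rightarrow> nat \<Rightarrow> real" where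
  "summand s j l = real (digit s l j) / real (den l j)"

definition rotation :: "nat set \<Rightarrow> nat \<Rightarrow> real" where
  "rotation s j = (if j < m then (\<Sum>l. summand s j l) else 0)"

definition num :: "nat set \<Rightarrow> nat \<Rightarrow> nat \<Rightarrow> nat" where
  "num s i j = (\<Sum>l<Suc i. digit s l j * p j ^ (expo i j - expo l j))"

definition den_prod :: "nat \<Rightarrow> nat" where
  "den_prod i = (\<Prod>j<m. den i j)"

lemma summand_bounds: "j < m \<Longrightarrow> 0 < summand s j l \<and> summand s j l \<le> 2 * real prime_prod * (1 / real (scale l))"
proof -
  assume j: "j < m"
  have "1 \<le> digit s l j" "digit s l j \<le> 2 * prime_prod"
    using p_le_prime_prod[OF j] prime_prod_ge_1 by (auto simp: digit_def)
  moreover have "real (digit s l j) / real (den l j) \<le> real (2 * prime_prod) / real (scale l)"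
    using calculation den_ge[of l j] scale_ge_1[of l] by (intro frac_le) auto
  ultimately show ?thesis
    unfolding summand_def using den_ge_1[of l j] by simp
qed

lemma summable_summand: "j < m \<Longrightarrow> summable (summand s j)"
proof -
  assume j: "j < m"
  have "summable (\<lambda>l. 2 * real prime_prod * (1 / real (scale l)))"
    using doubling_inverse_summable(1)[of scale 0, OF scale_ge_1 scale_doubling] by (intro summable_mult) simp
  then show ?thesis
    by (rule summable_comparison_test'[of _ 0]) (use summand_bounds[OF j] in \<open>auto simp: less_imp_le\<close>)
qed

lemma sum_summand_eq: "j < m \<Longrightarrow> (\<Sum>l<Suc i. summand s j l) = real (num s i j) / real (den i j)"
proof -
  assume j: "j < m"
  have "real (num s i j) / real (den i j)
      = (\<Sum>l<Suc i. real (digit s l j) * real (p j) ^ (expo i j - expo l j)) / real (p j) ^ expo i j"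
    unfolding num_def den_def by (simp only: of_nat_sum of_nat_mult of_nat_power)
  also have "\<dots> = (\<Sum>l<Suc i. real (digit s l j) * real (p j) ^ (expo i j - expo l j) / real (p j) ^ expo i j)"
    by (rule sum_divide_distrib)
  also have "\<dots> = (\<Sum>l<Suc i. summand s j l)"
  proof (rule sum.cong[OF refl])
    fix l assume "l \<in> {..<Suc i}"
    then have "expo l j \<le> expo i j" using strict_mono_less_eq[OF strict_mono_expo[OF j]] by simp
    then have "real (p j) ^ expo i j = real (p j) ^ (expo i j - expo l j) * real (p j) ^ expo l j"
      by (simp add: power_add[symmetric])
    then show "real (digit s l j) * real (p j) ^ (expo i j - expo l j) / real (p j) ^ expo i j = summand s j l"
      using p_ge_2[of j] by (simp add: summand_def den_def)
  qed
  finally show ?thesis by simp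
qed

lemma rotation_minus_fraction:
  assumes j: "j < m"
  shows "0 \<le> rotation s j - real (num s i j) / real (den i j)"
    and "rotation s j - real (num s i j) / real (den i j) \<le> 4 * real prime_prod / real (scale (Suc i))"
proof -
  have summable: "summable (summand s j)" by (rule summable_summand[OF j])
  have tail: "summable (\<lambda>n. summand s j (n + Suc i))"
    using summable by (rule summable_ignore_initial_segment)
  have eq: "rotation s j - real (num s i j) / real (den i j) = (\<Sum>n. summand s j (n + Suc i))"
    using j suminf_split_initial_segment[OF summable, of "Suc i"] sum_summand_eq[OF j, of s i]
    by (simp add: rotation_def)
  note geometric = doubling_inverse_summable[of scale, OF scale_ge_1 scale_doubling, of "Suc i"]
  show "0 \<le> rotation s j - real (num s i j) / real (den i j)"
    unfolding eq by (rule suminf_nonneg[OF tail]) (use summand_bounds[OF j] in \<open>auto simp: less_imp_le\<close>)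
  have "(\<Sum>n. summand s j (n + Suc i)) \<le> (\<Sum>n. 2 * real prime_prod * (1 / real (scale (n + Suc i))))"
    by (rule suminf_le[OF _ tail summable_mult[OF geometric(1)]]) (use summand_bounds[OF j] in blast)
  also have "\<dots> = 2 * real prime_prod * (\<Sum>n. 1 / real (scale (n + Suc i)))"
    by (rule suminf_mult[OF geometric(1)])
  also have "\<dots> \<le> 2 * real prime_prod * (2 / real (scale (Suc i)))"
    using geometric(2) by (intro mult_left_mono) auto
  finally show "rotation s j - real (num s i j) / real (den i j) \<le> 4 * real prime_prod / real (scale (Suc i))"
    unfolding eq by simp
qed

lemma rotation_bounds: "j < m \<Longrightarrow> 0 < rotation s j \<and> rotation s j < 1"
proof -
  assume j: "j < m"
  have summable: "summable (summand s j)" by (rule summable_summand[OF j])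
  note geometric = doubling_inverse_summable[of scale 0, OF scale_ge_1 scale_doubling, unfolded add_0_right]
  have "(\<Sum>l. summand s j l) \<le> (\<Sum>n. 2 * real prime_prod * (1 / real (scale n)))"
    by (rule suminf_le[OF _ summable summable_mult[OF geometric(1)]]) (use summand_bounds[OF j] in blast)
  also have "\<dots> = 2 * real prime_prod * (\<Sum>n. 1 / real (scale n))"
    by (rule suminf_mult[OF geometric(1)])
  also have "\<dots> \<le> 2 * real prime_prod * (2 / real (scale 0))"
    using geometric(2) by (intro mult_left_mono) auto
  also have "\<dots> = 1 / 2"
    using prime_prod_ge_1 by simp
  finally show ?thesis
    using j suminf_pos[OF summable] summand_bounds[OF j] by (simp add: rotation_def)
qed

lemma p_not_dvd_num: "j < m \<Longrightarrow> \<not> p j dvd num s i j"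
proof
  assume j: "j < m" and dvd: "p j dvd num s i j"
  have "p j dvd (\<Sum>l<i. digit s l j * p j ^ (expo i j - expo l j))"
  proof (rule dvd_sum)
    fix l assume "l \<in> {..<i}"
    then have "expo l j < expo i j" using strict_mono_less[OF strict_mono_expo[OF j]] by simp
    then show "p j dvd digit s l j * p j ^ (expo i j - expo l j)" by (simp add: dvd_power)
  qed
  then have "p j dvd (\<Sum>l<i. digit s l j * p j ^ (expo i j - expo l j)) + (if i \<in> s then p j else 0)"
    by simp
  moreover have "num s i j = (\<Sum>l<i. digit s l j * p j ^ (expo i j - expo l j)) + (if i \<in> s then p j else 0) + 1"
    by (simp add: num_def digit_def)
  ultimately have "p j dvd 1" using dvd by (simp only: dvd_add_right_iff)
  then show False using p_ge_2[of j] by simp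
qed

lemma coprime_num_den: "j < m \<Longrightarrow> coprime (int (num s i j)) (int (den i j))"
  using prime_imp_coprime[OF prime_p p_not_dvd_num] by (simp add: den_def coprime_commute)

lemma coprime_den: "j \<noteq> k \<Longrightarrow> coprime (int (den i j)) (int (den i k))"
proof -
  assume "j \<noteq> k"
  then have "coprime (p j) (p k)" using inj_p primes_coprime prime_p by (metis inj_eq)
  then show ?thesis by (simp add: den_def)
qed

lemma den_prod_le: "real (den_prod i) \<le> (real prime_prod * real (scale i)) ^ m"
proof -
  have "den_prod i \<le> (\<Prod>j<m. prime_prod * scale i)"
    unfolding den_prod_def by (rule prod_mono) (use den_le_prime_prod in auto)
  then have "den_prod i \<le> (prime_prod * scale i) ^ m" by simp
  then have "real (den_prod i) \<le> real ((prime_prod * scale i) ^ m)" by (simp only: of_nat_le_iff)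
  then show ?thesis by simp
qed

lemma den_le_den_prod: "j < m \<Longrightarrow> den i j \<le> den_prod i"
proof -
  assume j: "j < m"
  have "den i j dvd den_prod i" unfolding den_prod_def using j by (intro dvd_prodI) auto
  moreover have "0 < den_prod i" unfolding den_prod_def using den_ge_1 by (intro prod_pos) (auto intro: less_le_trans)
  ultimately show ?thesis by (rule dvd_imp_le)
qed

lemma strict_mono_scale_den_prod: "strict_mono (\<lambda>i. scale i * den_prod i)"
  unfolding strict_mono_Suc_iff
proof
  fix i
  have "den i j \<le> den (Suc i) j" if "j < m" for j
    using strict_mono_less_eq[OF strict_mono_expo[OF that], of i "Suc i"] p_ge_2[of j]
    by (simp add: den_def power_increasing)
  then have "den_prod i \<le> den_prod (Suc i)" unfolding den_prod_def by (intro prod_mono) auto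
  moreover have "0 < den_prod i" using den_le_den_prod[of 0 i] den_ge_1[of i 0] m_pos by simp
  ultimately show "scale i * den_prod i < scale (Suc i) * den_prod (Suc i)"
    using strict_mono_scale by (intro mult_less_le_imp_less) (auto simp: strict_mono_Suc_iff)
qed

lemma approximation_at_level:
  assumes j: "j < m"
  shows "(real m + 1) * real (scale i) * real (den_prod i) * \<bar>rotation s j - real (num s i j) / real (den i j)\<bar> \<le> 1"
proof -
  let ?T = "rotation s j - real (num s i j) / real (den i j)"
  have "(real m + 1) * real (scale i) * real (den_prod i) * \<bar>?T\<bar>
      \<le> (real m + 1) * real (scale i) * (real prime_prod * real (scale i)) ^ m * (4 * real prime_prod / real (scale (Suc i)))"
    using den_prod_le[of i] rotation_minus_fraction[OF j, of s i] by (intro mult_mono) auto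
  also have "\<dots> = real (scale (Suc i)) / real (scale (Suc i))"
    by (simp add: power_mult_distrib algebra_simps)
  also have "\<dots> = 1" using scale_ge_1[of "Suc i"] by simp
  finally show ?thesis .
qed

lemma rotation_close_to_fraction:
  assumes j: "j < m"
  shows "2 * real (den i j) * \<bar>rotation s j - real (num s i j) / real (den i j)\<bar> \<le> 1"
proof -
  have "2 * 1 \<le> (real m + 1) * real (scale i)"
    using m_pos scale_ge_1[of i] by (intro mult_mono) auto
  then have "2 * real (den i j) \<le> (real m + 1) * real (scale i) * real (den_prod i)"
    using den_le_den_prod[OF j, of i] by (intro mult_mono) auto
  then have "2 * real (den i j) * \<bar>rotation s j - real (num s i j) / real (den i j)\<bar>
      \<le> (real m + 1) * real (scale i) * real (den_prod i) * \<bar>rotation s j - real (num s i j) / real (den i j)\<bar>"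
    by (rule mult_right_mono) simp
  also have "\<dots> \<le> 1" by (rule approximation_at_level[OF j])
  finally show ?thesis .
qed

lemma inj_rotation: "inj rotation"
proof (rule injI, rule ccontr)
  fix s s' assume eq: "rotation s = rotation s'" and "s \<noteq> s'"
  from \<open>s \<noteq> s'\<close> have "\<exists>l. (l \<in> s) \<noteq> (l \<in> s')" by blast
  define i where "i = (LEAST l. (l \<in> s) \<noteq> (l \<in> s'))"
  have differ: "(i \<in> s) \<noteq> (i \<in> s')" unfolding i_def by (rule LeastI_ex) fact
  have agree: "(l \<in> s) = (l \<in> s')" if "l < i" for l
    using not_less_Least[OF that[unfolded i_def]] by simp
  have num_diff: "\<bar>real (num s i 0) - real (num s' i 0)\<bar> = real (p 0)"
  proof -
    have "(\<Sum>l<i. digit s l 0 * p 0 ^ (expo i 0 - expo l 0)) = (\<Sum>l<i. digit s' l 0 * p 0 ^ (expo i 0 - expo l 0))"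
      using agree by (intro sum.cong) (auto simp: digit_def)
    then show ?thesis using differ by (auto simp: num_def digit_def)
  qed
  have close: "2 * real (den i 0) * \<bar>rotation t 0 - real (num t i 0) / real (den i 0)\<bar> \<le> 1" for t
    using rotation_close_to_fraction[of 0] m_pos by simp
  define d where "d = real (den i 0)"
  have d: "0 < d" using den_ge_1[of i 0] by (simp add: d_def)
  have "\<bar>real (num s i 0) / d - real (num s' i 0) / d\<bar>
      \<le> \<bar>rotation s 0 - real (num s i 0) / d\<bar> + \<bar>rotation s' 0 - real (num s' i 0) / d\<bar>"
    using fun_cong[OF eq, of 0] by linarith
  then have "2 * d * \<bar>real (num s i 0) / d - real (num s' i 0) / d\<bar>
      \<le> 2 * d * \<bar>rotation s 0 - real (num s i 0) / d\<bar> + 2 * d * \<bar>rotation s' 0 - real (num s' i 0) / d\<bar>"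
    using d by (simp add: distrib_left[symmetric])
  also have "\<dots> \<le> 2"
    using close[of s] close[of s'] unfolding d_def by linarith
  finally have "2 * d * \<bar>real (num s i 0) / d - real (num s' i 0) / d\<bar> \<le> 2" .
  then have "2 * real (p 0) \<le> 2"
    using num_diff d by (simp add: diff_divide_distrib[symmetric] abs_mult)
  then show False using p_ge_2[of 0] by simp
qed

lemma coprime_approximation_at_level:
  "coprime_approximation m (real (scale i)) (real prime_prod)
     (\<lambda>j. int (den i j)) (\<lambda>j. int (num s i j)) (rotation s)"
proof
  fix j assume j: "j < m"
  show "real (scale i) \<le> real_of_int (int (den i j))" using den_ge[of i j] by simp
  show "real_of_int (int (den i j)) \<le> real prime_prod * real (scale i)"
    using den_le_prime_prod[OF j, of i] by (simp flip: of_nat_mult)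
  show "coprime (int (num s i j)) (int (den i j))" by (rule coprime_num_den[OF j])
  show "(real m + 1) * real (scale i) * real_of_int (\<Prod>k<m. int (den i k)) *
      \<bar>rotation s j - real_of_int (int (num s i j)) / real_of_int (int (den i j))\<bar> \<le> 1"
    using approximation_at_level[OF j, of i s] by (simp add: den_prod_def)
qed (use m_pos scale_ge_1 prime_prod_ge_1 coprime_den in auto)

lemma qi_families_rotation:
  "qi_families (\<lambda>i. circle) (\<lambda>i. warped_dist m (rotation s) (real (scale i * den_prod i)))
     (\<lambda>i. torus (Suc m)) (\<lambda>i x y. real (scale i) * torus_dist (Suc m) x y)"
proof -
  define C where "C = (2 * real m * real prime_prod + 1) * (real m + 1) + (real m + 2)"
  have C1: "(2 * real m * real prime_prod + 1) * (real m + 1) \<le> C" and C2: "real m + 2 \<le> C"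
    unfolding C_def by auto
  have "\<exists>f. quasi_isometry_on circle (warped_dist m (rotation s) (real (scale i * den_prod i)))
      (torus (Suc m)) (\<lambda>x y. real (scale i) * torus_dist (Suc m) x y) C (real m + 1) f" for i
  proof -
    interpret level: coprime_approximation m "real (scale i)" "real prime_prod"
        "\<lambda>j. int (den i j)" "\<lambda>j. int (num s i j)" "rotation s"
      by (rule coprime_approximation_at_level)
    have "real (scale i) * real_of_int level.Q = real (scale i * den_prod i)"
      by (simp add: level.Q_def den_prod_def)
    then show ?thesis using level.level_quasi_isometric[OF C1 C2] by metis
  qed
  then show ?thesis
    unfolding qi_families_iff using C2 by (intro exI[of _ C] exI[of _ "real m + 1"]) auto
qed

end

lemma exists_injective_prime_sequence: "\<exists>p :: nat \<Rightarrow> nat. (\<forall>j. prime (p j)) \<and> inj p"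
proof (intro exI conjI allI)
  have primes: "infinite {p :: nat. prime p}" by (rule primes_infinite)
  show "prime (enumerate {p :: nat. prime p} j)" for j
    using enumerate_in_set[OF primes] by simp
  show "inj (enumerate {p :: nat. prime p})"
    using strict_mono_enumerate[OF primes] by (rule strict_mono_imp_inj_on)
qed

theorem propositionA3:
  fixes m :: nat
  assumes "m \<ge> 1"
  shows "\<exists>t \<tau> :: nat \<Rightarrow> nat. strict_mono t \<and> strict_mono \<tau> \<and>
     (\<exists>S. uncountable S \<and>
        S \<subseteq> {\<alpha> :: nat \<Rightarrow> real. (\<forall>j<m. 0 < \<alpha> j \<and> \<alpha> j < 1) \<and> (\<forall>j\<ge>m. \<alpha> j = 0)} \<and>
        (\<forall>\<alpha>\<in>S. qi_families (\<lambda>i. circle) (\<lambda>i. warped_dist m \<alpha> (real (t i)))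
                             (\<lambda>i. torus (Suc m)) (\<lambda>i x y. real (\<tau> i) * torus_dist (Suc m) x y)))"
proof -
  obtain p :: "nat \<Rightarrow> nat" where "\<And>j. prime (p j)" "inj p"
    using exists_injective_prime_sequence by blast
  then interpret prime_digit_construction m p
    using assms by unfold_locales auto
  have "uncountable (range rotation)"
    using uncountable_UNIV_nat_set countable_image_inj_on[OF _ inj_rotation] by blast
  moreover have "range rotation \<subseteq> {\<alpha>. (\<forall>j<m. 0 < \<alpha> j \<and> \<alpha> j < 1) \<and> (\<forall>j\<ge>m. \<alpha> j = 0)}"
    using rotation_bounds by (auto simp: rotation_def)
  ultimately show ?thesis
    using strict_mono_scale_den_prod strict_mono_scale qi_families_rotation
    by (intro exI[of _ "\<lambda>i. scale i * den_prod i"] exI[of _ scale] exI[of _ "range rotation"] conjI) auto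
qed

end
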